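(* Let $n\ge 3$ and $1<\rho<3$. The supremum, over all configurations of closed unit balls with pairwise disjoint interiors, each tangent to the closed unit ball $B$ centered at the origin with interior disjoint from $B$, of the normalized measure $\omega_\rho(\rho S^{n-1}\cap\bigcup X)/\omega_\rho(\rho S^{n-1})$ of the part of $\rho S^{n-1}$ they cover equals $\tau_n A_{n,\rho}(1)$.
   Context: $\omega_\rho$ is the surface measure on the sphere $\rho S^{n-1}$ of radius $\rho$ centered at the origin. $A_{n,\rho}(1)=\omega_\rho(B_1\cap\rho S^{n-1})/\omega_\rho(\rho S^{n-1})$ where $B_1$ is a closed unit ball centered at distance $2$ from the origin. $\tau_n$ is the kissing number of $\mathbb{R}^n$: the maximum number of closed unit balls with pairwise disjoint interiors all touching a central closed unit ball and having interiors disjoint from it. *)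

theory Defs
  imports "HOL-Analysis.Analysis"
begin

text \<open>Surface measure on the sphere of radius rho centred at the origin, defined via the
  cone construction: the surface measure of a subset A of the sphere is DIM/rho times the
  Lebesgue measure of the cone of points t x with 0 <= t <= 1 and x in A.
  This coincides with the (n-1)-dimensional Hausdorff measure on the sphere.\<close>
definition omega :: "real \<Rightarrow> 'a::euclidean_space set \<Rightarrow> real" where
  "omega rho A = real DIM('a) / rho *
     measure lebesgue {t *\<^sub>R x | t x. 0 \<le> t \<and> t \<le> 1 \<and> x \<in> A \<inter> sphere 0 rho}"

definition kissing_config :: "'a::euclidean_space set \<Rightarrow> bool" where
  "kissing_config C \<longleftrightarrow>
     (\<forall>c\<in>C. cball c 1 \<inter> cball 0 1 \<noteq> {} \<and> ball c 1 \<inter> ball 0 1 = {}) \<and>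
     (\<forall>c\<in>C. \<forall>d\<in>C. c \<noteq> d \<longrightarrow> ball c 1 \<inter> ball d 1 = {})"

definition kissing_number :: "'a::euclidean_space itself \<Rightarrow> nat" where
  "kissing_number _ = Sup {card C | C :: 'a set. finite C \<and> kissing_config C}"

definition A_cap :: "'a::euclidean_space itself \<Rightarrow> real \<Rightarrow> real" where
  "A_cap _ rho = omega rho (cball (2 *\<^sub>R (SOME b. b \<in> (Basis :: 'a set))) 1 \<inter> sphere 0 rho)
                 / omega rho (sphere (0::'a) rho)"

end

theory Submission
  imports Defs
begin

text \<open>Up to the factor \<open>n / \<rho>\<close>, \<open>\<omega>\<^sub>\<rho>\<close> is the Lebesgue measure of the cone from the origin over the
  measured part of the sphere. The centres of a kissing configuration lie on the sphere of radius 2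
  and are pairwise at distance at least 2. Rotation invariance therefore gives every ball the cap
  measure \<open>A\<^sub>n\<^sub>,\<^sub>\<rho>(1)\<close>, and two caps of distinct balls meet only on the line through the sum of their
  centres, a null set. So a configuration \<open>C\<close> covers exactly \<open>|C| A\<^sub>n\<^sub>,\<^sub>\<rho>(1)\<close>, and since
  configurations are finite (volume packing) the supremum is attained at one of size \<open>\<tau>\<^sub>n\<close>.\<close>

text \<open>Invariance of Lebesgue measure under orthogonal maps is available only on \<open>real ^ 'n\<close> with a
  finite, well-ordered index type \<open>'n\<close>; indexing coordinates by the basis transfers it to an
  arbitrary Euclidean space.\<close>

typedef (overloaded) ('a::euclidean_space) basis_index = "Basis :: 'a set"
  using nonempty_Basis by blast

lemma bij_betw_Rep_basis_index: "bij_betw Rep_basis_index UNIV (Basis :: 'a::euclidean_space set)"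
  by (metis bij_betw_def inj_on_def Rep_basis_index_inject type_definition.Rep_range type_definition_basis_index)

instance basis_index :: (euclidean_space) finite
  by standard (metis bij_betw_Rep_basis_index bij_betw_finite finite_Basis)

instantiation basis_index :: (euclidean_space) wellorder
begin
definition less_eq_basis_index :: "'a basis_index \<Rightarrow> 'a basis_index \<Rightarrow> bool"
  where "less_eq_basis_index i j \<longleftrightarrow> to_nat i \<le> to_nat j"
definition less_basis_index :: "'a basis_index \<Rightarrow> 'a basis_index \<Rightarrow> bool"
  where "less_basis_index i j \<longleftrightarrow> to_nat i < to_nat j"
instance
proof
  fix P :: "'a basis_index \<Rightarrow> bool" and i
  assume step: "\<And>i. (\<And>j. j < i \<Longrightarrow> P j) \<Longrightarrow> P i"
  show "P i"
  proof (induction "to_nat i" arbitrary: i rule: less_induct)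
    case less
    then show ?case using step unfolding less_basis_index_def by blast
  qed
qed (auto simp: less_eq_basis_index_def less_basis_index_def inj_eq)
end

definition coords :: "'a::euclidean_space \<Rightarrow> real ^ 'a basis_index" where
  "coords x = (\<chi> i. x \<bullet> Rep_basis_index i)"

definition of_coords :: "real ^ 'a basis_index \<Rightarrow> 'a::euclidean_space" where
  "of_coords v = (\<Sum>i\<in>UNIV. v $ i *\<^sub>R Rep_basis_index i)"

lemma inner_of_coords: "of_coords v \<bullet> Rep_basis_index j = v $ j"
proof -
  have "of_coords v \<bullet> Rep_basis_index j = (\<Sum>i\<in>UNIV. v $ i * (Rep_basis_index i \<bullet> Rep_basis_index j))"
    by (simp add: of_coords_def inner_sum_left)
  also have "\<dots> = (\<Sum>i\<in>UNIV. if i = j then v $ i else 0)"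
    by (rule sum.cong) (auto simp: inner_Basis Rep_basis_index Rep_basis_index_inject)
  finally show ?thesis by simp
qed

lemma coords_of_coords [simp]: "coords (of_coords v) = v"
  by (simp add: coords_def inner_of_coords vec_eq_iff)

lemma of_coords_coords [simp]: "of_coords (coords x) = x"
proof -
  have "of_coords (coords x) = (\<Sum>i\<in>UNIV. (x \<bullet> Rep_basis_index i) *\<^sub>R Rep_basis_index i)"
    by (simp add: of_coords_def coords_def)
  also have "\<dots> = (\<Sum>b\<in>Basis. (x \<bullet> b) *\<^sub>R b)"
    by (rule sum.reindex_bij_betw[OF bij_betw_Rep_basis_index])
  finally show ?thesis by (simp add: euclidean_representation)
qed

lemma linear_coords: "linear coords"
  by (auto simp: linear_iff coords_def vec_eq_iff inner_add_left)

lemma linear_of_coords: "linear of_coords"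
  by (auto simp: linear_iff of_coords_def scaleR_add_left sum.distrib scaleR_sum_right)

lemma norm_coords [simp]: "norm (coords x) = norm x"
proof -
  have "norm (coords x) ^ 2 = (\<Sum>i\<in>UNIV. (x \<bullet> Rep_basis_index i) ^ 2)"
    by (simp add: norm_vec_def L2_set_def coords_def sum_nonneg)
  also have "\<dots> = (\<Sum>b\<in>Basis. (x \<bullet> b) ^ 2)"
    by (rule sum.reindex_bij_betw[OF bij_betw_Rep_basis_index])
  also have "\<dots> = norm x ^ 2"
    by (metis (no_types, lifting) euclidean_inner power2_eq_square power2_norm_eq_inner sum.cong)
  finally show ?thesis by (simp add: power2_eq_iff_nonneg)
qed

lemma norm_of_coords [simp]: "norm (of_coords v) = norm v"
  by (metis norm_coords coords_of_coords)

lemma borel_measurable_coords: "coords \<in> borel_measurable borel"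
  using linear_coords linear_conv_bounded_linear
  by (blast intro: borel_measurable_continuous_onI linear_continuous_on)

lemma borel_measurable_of_coords: "of_coords \<in> borel_measurable borel"
  using linear_of_coords linear_conv_bounded_linear
  by (blast intro: borel_measurable_continuous_onI linear_continuous_on)

lemma range_Rep_basis_index: "range Rep_basis_index = Basis"
  by (rule type_definition.Rep_range[OF type_definition_basis_index])

lemma vimage_of_coords_box: "of_coords -` box l u = box (coords l) (coords u)"
proof -
  have "of_coords v \<in> box l u \<longleftrightarrow> v \<in> box (coords l) (coords u)" for v
  proof -
    have "of_coords v \<in> box l u \<longleftrightarrow>
        (\<forall>b\<in>range Rep_basis_index. l \<bullet> b < of_coords v \<bullet> b \<and> of_coords v \<bullet> b < u \<bullet> b)"
      by (simp add: mem_box range_Rep_basis_index)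
    then show ?thesis
      by (simp add: mem_box_cart inner_of_coords coords_def)
  qed
  then show ?thesis by auto
qed

lemma lborel_distr_of_coords: "distr lborel borel of_coords = (lborel :: 'a::euclidean_space measure)"
proof (rule lborel_eqI[symmetric])
  fix l u :: 'a
  assume le: "\<And>b. b \<in> Basis \<Longrightarrow> l \<bullet> b \<le> u \<bullet> b"
  have "emeasure (distr lborel borel of_coords) (box l u) = emeasure lborel (box (coords l) (coords u))"
    by (simp add: emeasure_distr borel_measurable_of_coords vimage_of_coords_box)
  also have "\<dots> = (\<Prod>b\<in>Basis. (coords u - coords l) \<bullet> b)"
    using le by (intro emeasure_lborel_box) (auto simp: Basis_vec_def coords_def inner_axis Rep_basis_index)
  also have "\<dots> = (\<Prod>i\<in>UNIV. (u - l) \<bullet> Rep_basis_index i)"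
    by (simp add: Basis_vec_def axis_eq_axis prod.UNION_disjoint coords_def inner_axis inner_diff_left)
  also have "\<dots> = (\<Prod>b\<in>Basis. (u - l) \<bullet> b)"
    using prod.reindex_bij_betw[OF bij_betw_Rep_basis_index, of "\<lambda>b. (u - l) \<bullet> b"] by simp
  finally show "emeasure (distr lborel borel of_coords) (box l u) = (\<Prod>b\<in>Basis. (u - l) \<bullet> b)" .
qed simp

lemma coords_image_eq_vimage: "coords ` S = of_coords -` S"
  by (force simp: image_iff)

lemma of_coords_image_eq_vimage: "of_coords ` T = coords -` T"
  by (force simp: image_iff)

lemma measure_coords_image:
  fixes S :: "'a::euclidean_space set"
  assumes "S \<in> sets lborel"
  shows "measure lebesgue (coords ` S) = measure lebesgue S"
proof -
  have "coords ` S \<in> sets lborel"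
    using measurable_sets_borel[OF borel_measurable_of_coords] assms by (simp add: coords_image_eq_vimage)
  then have "measure lebesgue (coords ` S) = measure lborel (of_coords -` S)"
    by (simp add: coords_image_eq_vimage)
  also have "\<dots> = measure (distr lborel borel of_coords) S"
    using assms borel_measurable_of_coords by (subst measure_distr) auto
  finally show ?thesis
    using assms by (simp add: lborel_distr_of_coords)
qed

lemma measure_of_coords_image:
  assumes "T \<in> sets lborel"
  shows "measure lebesgue (of_coords ` T :: 'a::euclidean_space set) = measure lebesgue T"
proof -
  have "of_coords ` T \<in> sets lborel"
    using measurable_sets_borel[OF borel_measurable_coords] assms by (simp add: of_coords_image_eq_vimage)
  moreover have "coords ` of_coords ` T = T"
    by (force simp: image_iff)
  ultimately show ?thesis
    using measure_coords_image by metis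
qed

lemma orthogonal_transformation_exists_euclidean:
  fixes a b :: "'a::euclidean_space"
  assumes "norm a = norm b"
  obtains f where "orthogonal_transformation f" "f a = b"
proof -
  obtain g where g: "orthogonal_transformation g" "g (coords a) = coords b"
    using orthogonal_transformation_exists[of "coords a" "coords b"] assms by auto
  have "orthogonal_transformation (of_coords \<circ> g \<circ> coords :: 'a \<Rightarrow> 'a)"
    using g(1) linear_coords linear_of_coords
    by (auto simp: orthogonal_transformation orthogonal_transformation_norm intro: linear_compose)
  moreover have "(of_coords \<circ> g \<circ> coords) a = b"
    by (simp add: g(2))
  ultimately show ?thesis using that by blast
qed

lemma measure_orthogonal_image_euclidean:
  fixes f :: "'a::euclidean_space \<Rightarrow> 'a"
  assumes f: "orthogonal_transformation f" and S: "compact S"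
  shows "measure lebesgue (f ` S) = measure lebesgue S"
proof -
  define g where "g = coords \<circ> f \<circ> of_coords"
  have g: "orthogonal_transformation g"
    using f linear_coords linear_of_coords
    by (auto simp: g_def orthogonal_transformation orthogonal_transformation_norm intro: linear_compose)
  have "f ` S = of_coords ` g ` coords ` S"
    by (force simp: g_def image_comp)
  have cS: "compact (coords ` S)"
    using S linear_coords linear_conv_bounded_linear
    by (blast intro: compact_continuous_image linear_continuous_on)
  then have cgS: "compact (g ` coords ` S)"
    using g orthogonal_transformation_linear linear_conv_bounded_linear
    by (blast intro: compact_continuous_image linear_continuous_on)
  have "measure lebesgue (f ` S) = measure lebesgue (g ` coords ` S)"
    using \<open>f ` S = _\<close> cgS by (simp add: measure_of_coords_image borel_compact)
  also have "\<dots> = measure lebesgue (coords ` S)"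
    using g cS by (simp add: measure_orthogonal_image lmeasurable_compact)
  also have "\<dots> = measure lebesgue S"
    using S by (simp add: measure_coords_image borel_compact)
  finally show ?thesis .
qed

definition spherical_cone :: "real \<Rightarrow> 'a::euclidean_space set \<Rightarrow> 'a set" where
  "spherical_cone rho A = {t *\<^sub>R x | t x. 0 \<le> t \<and> t \<le> 1 \<and> x \<in> A \<inter> sphere 0 rho}"

lemma omega_eq_measure_spherical_cone:
  "omega rho A = real DIM('a) / rho * measure lebesgue (spherical_cone rho (A :: 'a::euclidean_space set))"
  by (simp add: omega_def spherical_cone_def)

lemma spherical_cone_eq_image:
  "spherical_cone rho A = (\<lambda>(t, x). t *\<^sub>R x) ` ({0..1} \<times> (A \<inter> sphere 0 rho))"
  unfolding spherical_cone_def by force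

lemma compact_spherical_cone:
  fixes A :: "'a::euclidean_space set"
  assumes "closed A"
  shows "compact (spherical_cone rho A)"
  unfolding spherical_cone_eq_image case_prod_unfold
  by (intro compact_continuous_image continuous_intros compact_Times closed_Int_compact assms) auto

lemma spherical_cone_Int_sphere [simp]: "spherical_cone rho (sphere 0 rho \<inter> A) = spherical_cone rho A"
  by (auto simp: spherical_cone_def)

lemma spherical_cone_UN: "spherical_cone rho (\<Union>c\<in>C. A c) = (\<Union>c\<in>C. spherical_cone rho (A c))"
  unfolding spherical_cone_def by blast

lemma image_orthogonal_transformation_spherical_cone:
  fixes f :: "'a::euclidean_space \<Rightarrow> 'a"
  assumes f: "orthogonal_transformation f"
  shows "f ` spherical_cone rho A = spherical_cone rho (f ` A)"
proof
  show "f ` spherical_cone rho A \<subseteq> spherical_cone rho (f ` A)"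
    using f by (fastforce simp: spherical_cone_def orthogonal_transformation_scaleR orthogonal_transformation_norm)
  show "spherical_cone rho (f ` A) \<subseteq> f ` spherical_cone rho A"
  proof
    fix z assume "z \<in> spherical_cone rho (f ` A)"
    then obtain t x where "z = t *\<^sub>R f x" "0 \<le> t" "t \<le> 1" "x \<in> A" "norm (f x) = rho"
      unfolding spherical_cone_def by auto
    then show "z \<in> f ` spherical_cone rho A"
      using f by (auto simp: spherical_cone_def orthogonal_transformation_scaleR orthogonal_transformation_norm
          intro!: image_eqI[where x = "t *\<^sub>R x"])
  qed
qed

lemma measure_spherical_cone_cball_eq:
  fixes c d :: "'a::euclidean_space"
  assumes "norm c = norm d"
  shows "measure lebesgue (spherical_cone rho (cball c r)) = measure lebesgue (spherical_cone rho (cball d r))"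
proof -
  obtain f where f: "orthogonal_transformation f" "f c = d"
    using orthogonal_transformation_exists_euclidean[OF assms] by blast
  then have "f ` spherical_cone rho (cball c r) = spherical_cone rho (cball d r)"
    by (simp add: image_orthogonal_transformation_spherical_cone image_orthogonal_transformation_cball)
  then show ?thesis
    using measure_orthogonal_image_euclidean[OF f(1) compact_spherical_cone] by (metis closed_cball)
qed

lemma disjoint_ballD:
  fixes x y :: "'a::real_normed_vector"
  assumes "ball x r \<inter> ball y r = {}"
  shows "2 * r \<le> dist x y"
proof (rule ccontr)
  assume "\<not> 2 * r \<le> dist x y"
  then have "midpoint x y \<in> ball x r \<inter> ball y r"
    by (simp add: dist_midpoint)
  then show False
    using assms by blast
qed

lemma kissing_config_norm:
  fixes C :: "'a::euclidean_space set"
  assumes "kissing_config C" "c \<in> C"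
  shows "norm c = 2"
proof -
  obtain z where z: "dist c z \<le> 1" "norm z \<le> 1"
    using assms unfolding kissing_config_def by (metis IntE all_not_in_conv mem_cball mem_cball_0)
  have "norm c \<le> 2"
    using norm_triangle_ineq[of "c - z" z] z by (simp add: dist_norm)
  moreover have "2 \<le> norm c"
    using disjoint_ballD[of c 1 0] assms unfolding kissing_config_def by simp
  ultimately show ?thesis by simp
qed

lemma kissing_config_dist:
  fixes C :: "'a::euclidean_space set"
  assumes "kissing_config C" "c \<in> C" "d \<in> C" "c \<noteq> d"
  shows "2 \<le> dist c d"
  using disjoint_ballD[of c 1 d] assms unfolding kissing_config_def by simp

text \<open>Volume packing: the open unit balls around a configuration are disjoint and lie in \<open>ball 0 3\<close>.\<close>
lemma card_subset_kissing_config_le: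
  fixes C :: "'a::euclidean_space set"
  assumes "kissing_config C" "finite F" "F \<subseteq> C"
  shows "card F \<le> 3 ^ DIM('a)"
proof -
  let ?u = "measure lebesgue (ball (0::'a) 1)"
  have measure_ball: "measure lebesgue (ball c r) = r ^ DIM('a) * ?u" if "r \<ge> 0" for c :: 'a and r
    using content_ball_conv_unit_ball[OF that, of c] by simp
  have "measure lebesgue (\<Union>c\<in>F. ball c 1) = (\<Sum>c\<in>F. measure lebesgue (ball c 1))"
  proof (rule measure_negligible_finite_Union_image[OF assms(2)])
    show "pairwise (\<lambda>c d. negligible (ball c 1 \<inter> ball d 1)) F"
      using assms unfolding pairwise_def kissing_config_def by (metis negligible_empty subsetD)
  qed auto
  also have "\<dots> = (\<Sum>c\<in>F. ?u)"
    using measure_ball[of 1] by (intro sum.cong) simp_all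
  also have "\<dots> = card F * ?u"
    by simp
  finally have union: "measure lebesgue (\<Union>c\<in>F. ball c 1) = card F * ?u" .
  have "(\<Union>c\<in>F. ball c 1) \<subseteq> ball 0 3"
  proof
    fix z assume "z \<in> (\<Union>c\<in>F. ball c 1)"
    then obtain c where "c \<in> F" "dist c z < 1" by auto
    moreover have "norm z \<le> norm c + dist c z"
      by (metis dist_0_norm dist_triangle)
    ultimately show "z \<in> ball 0 3"
      using kissing_config_norm assms by fastforce
  qed
  then have "measure lebesgue (\<Union>c\<in>F. ball c 1) \<le> measure lebesgue (ball (0::'a) 3)"
    by (intro measure_mono_fmeasurable) (use assms(2) in auto)
  then have "card F * ?u \<le> 3 ^ DIM('a) * ?u"
    using union measure_ball[of 3 0] by simp
  then have "real (card F) \<le> 3 ^ DIM('a)"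
    using content_ball_pos[of 1 "0::'a"] by simp
  then show ?thesis
    by (metis of_nat_le_iff of_nat_numeral of_nat_power)
qed

lemma kissing_config_finite:
  fixes C :: "'a::euclidean_space set"
  assumes "kissing_config C"
  shows "finite C"
proof (rule ccontr)
  assume "infinite C"
  then obtain F where "F \<subseteq> C" "finite F" "card F = Suc (3 ^ DIM('a))"
    using infinite_arbitrarily_large by blast
  then show False
    using card_subset_kissing_config_le[OF assms] by fastforce
qed

text \<open>From \<open>|x - c|, |x - d| \<le> 1\<close> one gets \<open>x \<bullet> (c + d) \<ge> |x|\<^sup>2 + 3\<close>, while \<open>|c + d|\<^sup>2 \<le> 12\<close>
  gives \<open>|x| |c + d| \<le> \<surd>12 |x| \<le> |x|\<^sup>2 + 3\<close>; so Cauchy-Schwarz holds with equality.\<close>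
lemma cball_Int_cball_subset_span:
  fixes c d :: "'a::euclidean_space"
  assumes "norm c = 2" "norm d = 2" "2 \<le> dist c d"
  shows "cball c 1 \<inter> cball d 1 \<subseteq> span {c + d}"
proof
  fix x assume x: "x \<in> cball c 1 \<inter> cball d 1"
  have inner_cap: "norm x ^ 2 + 3 \<le> 2 * (x \<bullet> e)" if "norm e = 2" "dist e x \<le> 1" for e
  proof -
    have "norm (x - e) ^ 2 \<le> 1"
      using that by (simp add: dist_norm norm_minus_commute power_le_one)
    then show ?thesis
      using dot_norm_neg[of x e] that by simp
  qed
  have lower: "norm x ^ 2 + 3 \<le> x \<bullet> (c + d)"
    using inner_cap[of c] inner_cap[of d] assms x by (simp add: inner_add_right)
  have "2 ^ 2 \<le> norm (c - d) ^ 2"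
    using assms(3) by (intro power_mono) (auto simp: dist_norm)
  then have "norm (c + d) ^ 2 \<le> 12"
    using dot_norm[of c d] dot_norm_neg[of c d] assms by simp
  then have "(norm x * norm (c + d)) ^ 2 \<le> (norm x ^ 2 + 3) ^ 2"
    using mult_left_mono[of "norm (c + d) ^ 2" 12 "norm x ^ 2"]
      sum_power2_ge_zero[of "norm x ^ 2 - 3" 0]
    by (simp add: power_mult_distrib power2_eq_square algebra_simps)
  then have "norm x * norm (c + d) \<le> norm x ^ 2 + 3"
    by (rule power2_le_imp_le) simp
  then have "x \<bullet> (c + d) = norm x * norm (c + d)"
    using lower norm_cauchy_schwarz[of x "c + d"] by linarith
  then have parallel: "norm x *\<^sub>R (c + d) = norm (c + d) *\<^sub>R x"
    by (simp add: norm_cauchy_schwarz_eq)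
  have "c + d \<noteq> 0"
    using lower by (smt (verit) inner_zero_right zero_le_power2)
  then have "x = inverse (norm (c + d)) *\<^sub>R (norm x *\<^sub>R (c + d))"
    using parallel by simp
  then show "x \<in> span {c + d}"
    by (metis span_base span_scale singletonI)
qed

lemma negligible_spherical_cone_Int:
  fixes c d :: "'a::euclidean_space"
  assumes "DIM('a) \<ge> 2" "norm c = 2" "norm d = 2" "2 \<le> dist c d" "rho > 0"
  shows "negligible (spherical_cone rho (cball c 1) \<inter> spherical_cone rho (cball d 1))"
proof (rule negligible_subset)
  show "negligible (span {c + d})"
    using dim_le_card[of "{c + d}" "{c + d}"] assms(1) by (intro negligible_lowdim) (simp add: dim_span)
  show "spherical_cone rho (cball c 1) \<inter> spherical_cone rho (cball d 1) \<subseteq> span {c + d}"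
  proof
    fix z assume z: "z \<in> spherical_cone rho (cball c 1) \<inter> spherical_cone rho (cball d 1)"
    then obtain t x where tx: "z = t *\<^sub>R x" "0 \<le> t" "x \<in> cball c 1" "norm x = rho"
      unfolding spherical_cone_def by auto
    obtain s y where sy: "z = s *\<^sub>R y" "0 \<le> s" "y \<in> cball d 1" "norm y = rho"
      using z unfolding spherical_cone_def by auto
    show "z \<in> span {c + d}"
    proof (cases "t = 0")
      case True
      then show ?thesis using tx by (simp add: span_zero)
    next
      case False
      have "t = s"
        using tx sy \<open>rho > 0\<close> by (metis norm_scaleR abs_of_nonneg mult_right_cancel less_irrefl)
      then have "x \<in> cball c 1 \<inter> cball d 1"
        using tx sy False by auto
      then show ?thesis
        using cball_Int_cball_subset_span[OF assms(2-4)] tx by (auto intro: span_scale)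
    qed
  qed
qed

lemma finite_kissing_config_cards:
  "finite {card C | C :: 'a::euclidean_space set. finite C \<and> kissing_config C}"
  by (rule finite_subset[of _ "{..3 ^ DIM('a)}"]) (auto simp: card_subset_kissing_config_le)

lemma card_le_kissing_number:
  fixes C :: "'a::euclidean_space set"
  assumes "kissing_config C"
  shows "card C \<le> kissing_number TYPE('a)"
  unfolding kissing_number_def
  using assms kissing_config_finite by (blast intro: le_cSup_finite[OF finite_kissing_config_cards])

lemma kissing_number_attained:
  obtains C :: "'a::euclidean_space set" where "kissing_config C" "card C = kissing_number TYPE('a)"
proof -
  let ?K = "{card C | C :: 'a set. finite C \<and> kissing_config C}"
  have "kissing_config ({} :: 'a set)"
    by (simp add: kissing_config_def)
  then have "card ({} :: 'a set) \<in> ?K"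
    by blast
  then have "kissing_number TYPE('a) \<in> ?K"
    unfolding kissing_number_def
    using cSup_eq_Max[OF finite_kissing_config_cards] Max_in[OF finite_kissing_config_cards] by force
  then obtain C :: "'a set" where "kissing_config C" "card C = kissing_number TYPE('a)"
    by auto
  then show ?thesis
    by (rule that)
qed

lemma A_cap_nonneg:
  assumes "rho > 0"
  shows "A_cap TYPE('a::euclidean_space) rho \<ge> 0"
  using assms by (simp add: A_cap_def omega_def)

lemma kissing_config_coverage:
  fixes C :: "'a::euclidean_space set"
  assumes "DIM('a) \<ge> 2" "rho > 0" "kissing_config C"
  shows "omega rho (sphere (0::'a) rho \<inter> (\<Union>c\<in>C. cball c 1)) / omega rho (sphere (0::'a) rho)
         = real (card C) * A_cap TYPE('a) rho"
proof -
  define e :: 'a where "e = 2 *\<^sub>R (SOME b. b \<in> Basis)"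
  have "(SOME b. b \<in> Basis) \<in> (Basis :: 'a set)"
    by (rule someI_ex) (use nonempty_Basis in blast)
  then have norm_e: "norm e = 2"
    by (simp add: e_def)
  define m where "m = measure lebesgue (spherical_cone rho (cball e 1))"
  have "measure lebesgue (spherical_cone rho (\<Union>c\<in>C. cball c 1))
      = (\<Sum>c\<in>C. measure lebesgue (spherical_cone rho (cball c 1)))"
    unfolding spherical_cone_UN
  proof (rule measure_negligible_finite_Union_image[OF kissing_config_finite[OF assms(3)]])
    show "spherical_cone rho (cball c 1) \<in> lmeasurable" for c :: 'a
      by (simp add: lmeasurable_compact compact_spherical_cone)
    show "pairwise (\<lambda>c d. negligible (spherical_cone rho (cball c 1) \<inter> spherical_cone rho (cball d 1))) C"
      using negligible_spherical_cone_Int[OF assms(1) _ _ _ assms(2)]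
        kissing_config_norm[OF assms(3)] kissing_config_dist[OF assms(3)]
      unfolding pairwise_def by blast
  qed
  also have "\<dots> = (\<Sum>c\<in>C. m)"
    using kissing_config_norm[OF assms(3)] norm_e
    by (intro sum.cong) (auto simp: m_def intro: measure_spherical_cone_cball_eq)
  finally have "measure lebesgue (spherical_cone rho (\<Union>c\<in>C. cball c 1)) = card C * m"
    by simp
  moreover have "A_cap TYPE('a) rho = real DIM('a) / rho * m / omega rho (sphere (0::'a) rho)"
    by (simp add: A_cap_def omega_eq_measure_spherical_cone m_def e_def Int_commute)
  ultimately show ?thesis
    by (simp add: omega_eq_measure_spherical_cone)
qed

theorem mainTheorem10:
  assumes "DIM('a::euclidean_space) \<ge> 3" and "1 < rho" and "rho < 3"
  shows "Sup {omega rho (sphere (0::'a) rho \<inter> (\<Union>c\<in>C. cball c 1)) / omega rho (sphere (0::'a) rho)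
              | C :: 'a set. kissing_config C}
         = real (kissing_number TYPE('a)) * A_cap TYPE('a) rho"
proof -
  have dim: "DIM('a) \<ge> 2" and rho: "rho > 0"
    using assms by auto
  let ?cover = "\<lambda>C :: 'a set. omega rho (sphere 0 rho \<inter> (\<Union>c\<in>C. cball c 1)) / omega rho (sphere (0::'a) rho)"
  obtain C0 :: "'a set" where C0: "kissing_config C0" "card C0 = kissing_number TYPE('a)"
    by (rule kissing_number_attained)
  show ?thesis
  proof (rule cSup_eq_maximum)
    show "real (kissing_number TYPE('a)) * A_cap TYPE('a) rho \<in> {?cover C | C. kissing_config C}"
      using kissing_config_coverage[OF dim rho C0(1)] C0 by force
  next
    fix x assume "x \<in> {?cover C | C. kissing_config C}"
    then obtain C where "kissing_config C" "x = ?cover C"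
      by blast
    then show "x \<le> real (kissing_number TYPE('a)) * A_cap TYPE('a) rho"
      using kissing_config_coverage[OF dim rho] card_le_kissing_number[of C] A_cap_nonneg[OF rho, where 'a = 'a]
      by (simp add: mult_right_mono)
  qed
qed

end
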